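(* Let $n\in\mathbb{N}$ and let $A:\mathbb{R}[x_1,\dots,x_n]\to\mathbb{R}[x_1,\dots,x_n]$ be a linear map belonging to $\mathfrak{g}$. Then $A$ has a complex eigenvalue, i.e., there exist $\lambda\in\mathbb{C}$ and a nonzero polynomial $p\in\mathbb{C}[x_1,\dots,x_n]$ such that $A p=\lambda p$, where $A$ is extended $\mathbb{C}$-linearly to $\mathbb{C}[x_1,\dots,x_n]$.
   Context: Topology on polynomials: a sequence $(p_i)_{i\in\mathbb{N}_0}$ in $\mathbb{R}[x_1,\dots,x_n]$ converges to $p$ if and only if $\sup_i \deg p_i<\infty$ and for every $\alpha\in\mathbb{N}_0^n$ the $x^\alpha$-coefficient of $p_i$ converges to the $x^\alpha$-coefficient of $p$. For a linear map $A$ on $\mathbb{R}[x_1,\dots,x_n]$ and $t\in\mathbb{R}$, the map $e^{tA}$ is called well-defined if for every polynomial $f$ the partial sums $\sum_{k=0}^{N}\frac{t^k}{k!}A^k f$ converge (as $N\to\infty$) in this sense to a polynomial, which is then $e^{tA}f$. Define $\mathfrak{g}$ as the set of all linear maps $A:\mathbb{R}[x_1,\dots,x_n]\to\mathbb{R}[x_1,\dots,x_n]$ such that $e^{tA}$ is well-defined for all $t\in\mathbb{R}$. *)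

theory Defs
  imports "HOL-Analysis.Analysis" "HOL-Library.Poly_Mapping"
begin

text \<open>The polynomial ring in n variables is the subset Pn n of polynomials only
  involving the variables with index < n.\<close>

type_synonym 'a mpoly = "(nat \<Rightarrow>\<^sub>0 nat) \<Rightarrow>\<^sub>0 'a"

definition mdeg :: "(nat \<Rightarrow>\<^sub>0 nat) \<Rightarrow> nat" where
  "mdeg m = sum (Poly_Mapping.lookup m) (Poly_Mapping.keys m)"

definition Pn :: "nat \<Rightarrow> ('a::zero) mpoly set" where
  "Pn n = {p. \<forall>m\<in>Poly_Mapping.keys p. \<forall>i\<in>Poly_Mapping.keys m. i < n}"

definition psmult :: "'a::semiring_0 \<Rightarrow> 'a mpoly \<Rightarrow> 'a mpoly" where
  "psmult c p = Poly_Mapping.map (\<lambda>x. c * x) p"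

definition poly_conv :: "(nat \<Rightarrow> real mpoly) \<Rightarrow> real mpoly \<Rightarrow> bool" where
  "poly_conv P p \<longleftrightarrow> (\<exists>D. \<forall>i. \<forall>m\<in>Poly_Mapping.keys (P i). mdeg m \<le> D)
                     \<and> (\<forall>m. (\<lambda>i. Poly_Mapping.lookup (P i) m) \<longlonglongrightarrow> Poly_Mapping.lookup p m)"

definition linear_on_Pn :: "nat \<Rightarrow> (real mpoly \<Rightarrow> real mpoly) \<Rightarrow> bool" where
  "linear_on_Pn n A \<longleftrightarrow> (\<forall>p\<in>Pn n. A p \<in> Pn n)
     \<and> (\<forall>p\<in>Pn n. \<forall>q\<in>Pn n. A (p + q) = A p + A q)
     \<and> (\<forall>c. \<forall>p\<in>Pn n. A (psmult c p) = psmult c (A p))"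

definition exp_well_defined :: "nat \<Rightarrow> (real mpoly \<Rightarrow> real mpoly) \<Rightarrow> real \<Rightarrow> bool" where
  "exp_well_defined n A t \<longleftrightarrow> (\<forall>f\<in>Pn n. \<exists>g\<in>Pn n.
      poly_conv (\<lambda>N. \<Sum>k\<le>N. psmult (t ^ k / fact k) ((A ^^ k) f)) g)"

definition frakg :: "nat \<Rightarrow> (real mpoly \<Rightarrow> real mpoly) set" where
  "frakg n = {A. linear_on_Pn n A \<and> (\<forall>t. exp_well_defined n A t)}"

definition complexify :: "(real mpoly \<Rightarrow> real mpoly) \<Rightarrow> complex mpoly \<Rightarrow> complex mpoly" where
  "complexify A p =
     Poly_Mapping.map complex_of_real (A (Poly_Mapping.map Re p))
   + psmult \<i> (Poly_Mapping.map complex_of_real (A (Poly_Mapping.map Im p)))"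

end

theory Submission
  imports Defs "HOL-Computational_Algebra.Fundamental_Theorem_Algebra"
begin

(* Since e^A 1 is well defined, the partial sums of its exponential series have bounded degree,
   so the iterates A^k 1 all lie in the finite-dimensional span of the monomials of bounded degree
   in n variables. Hence they are linearly dependent: q(A) 1 = 0 for some nonzero polynomial q.
   Over the complex numbers q splits into linear factors; applying them to 1 one at a time, the
   last nonzero vector reached is killed by a factor A - a, so it is an eigenvector. *)

context vector_space
begin

lemma sequence_in_finite_span_dependent:
  fixes f :: "nat \<Rightarrow> 'b"
  assumes "finite B" "\<And>k. f k \<in> span B"
  shows "\<exists>k. f k \<in> span (f ` {..<k})"
proof (rule ccontr)
  assume "\<nexists>k. f k \<in> span (f ` {..<k})"
  then have new: "f k \<notin> span (f ` {..<k})" for k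
    by simp
  have indep: "independent (f ` {..<k}) \<and> card (f ` {..<k}) = k" for k
  proof (induction k)
    case 0
    show ?case
      by (simp add: independent_empty)
  next
    case (Suc k)
    have "f k \<notin> f ` {..<k}"
      using new[of k] by (metis span_base)
    moreover have "independent (insert (f k) (f ` {..<k}))"
      using Suc.IH new[of k] by (simp add: independent_insertI)
    ultimately show ?case
      using Suc.IH by (simp add: lessThan_Suc)
  qed
  have "card (f ` {..<Suc (card B)}) \<le> card B"
    using independent_span_bound[OF assms(1), of "f ` {..<Suc (card B)}"] indep assms(2) by blast
  with indep show False
    by simp
qed

lemma in_span_image_lessThan:
  fixes f :: "nat \<Rightarrow> 'b"
  shows "x \<in> span (f ` {..<k}) \<Longrightarrow> \<exists>c. x = (\<Sum>j<k. c j *s f j)"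
proof (induction k arbitrary: x)
  case (Suc k)
  have "span (f ` {..<Suc k}) = span (insert (f k) (f ` {..<k}))"
    by (simp add: lessThan_Suc)
  with Suc.prems obtain a where "x - a *s f k \<in> span (f ` {..<k})"
    unfolding span_insert by blast
  with Suc.IH obtain c where "x - a *s f k = (\<Sum>j<k. c j *s f j)"
    by blast
  then have "x = (\<Sum>j<Suc k. (c(k := a)) j *s f j)"
    by (simp add: diff_eq_eq)
  then show ?case
    by blast
qed simp

end

locale linear_endo = vector_space scale
  for scale :: "'a::field \<Rightarrow> 'b::ab_group_add \<Rightarrow> 'b" (infixr \<open>*s\<close> 75) +
  fixes T :: "'b \<Rightarrow> 'b"
  assumes linear_T: "Vector_Spaces.linear scale scale T"
begin

sublocale T: Vector_Spaces.linear scale scale T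
  by (fact linear_T)

definition poly_apply :: "'a poly \<Rightarrow> 'b \<Rightarrow> 'b" where
  "poly_apply p x = (\<Sum>i\<le>degree p. coeff p i *s (T ^^ i) x)"

lemma poly_apply_eq_sum:
  assumes "degree p \<le> N"
  shows "poly_apply p x = (\<Sum>i\<le>N. coeff p i *s (T ^^ i) x)"
  unfolding poly_apply_def
  by (rule sum.mono_neutral_left) (use assms in \<open>auto simp: coeff_eq_0\<close>)

lemma poly_apply_0 [simp]: "poly_apply 0 x = 0"
  by (simp add: poly_apply_def)

lemma poly_apply_add: "poly_apply (p + q) x = poly_apply p x + poly_apply q x"
proof -
  define N where "N = max (degree p) (degree q)"
  have "poly_apply (p + q) x = (\<Sum>i\<le>N. coeff (p + q) i *s (T ^^ i) x)"
    by (rule poly_apply_eq_sum) (simp add: N_def degree_add_le)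
  also have "\<dots> = poly_apply p x + poly_apply q x"
    by (simp add: poly_apply_eq_sum[of p N] poly_apply_eq_sum[of q N] N_def
        scale_left_distrib sum.distrib)
  finally show ?thesis .
qed

lemma poly_apply_smult: "poly_apply (smult c p) x = c *s poly_apply p x"
  by (simp add: poly_apply_eq_sum[of "smult c p" "degree p"] poly_apply_def scale_sum_right)

lemma poly_apply_diff: "poly_apply (p - q) x = poly_apply p x - poly_apply q x"
  using poly_apply_add[of "p - q" q] by simp

lemma poly_apply_sum: "poly_apply (sum f I) x = (\<Sum>i\<in>I. poly_apply (f i) x)"
  by (induction I rule: infinite_finite_induct) (auto simp: poly_apply_add)

lemma poly_apply_monom: "poly_apply (monom c k) x = c *s (T ^^ k) x"
proof -
  have "poly_apply (monom c k) x = (\<Sum>i\<le>k. if i = k then c *s (T ^^ i) x else 0)"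
    unfolding poly_apply_eq_sum[OF degree_monom_le] by (rule sum.cong) (auto simp: coeff_monom)
  then show ?thesis
    by simp
qed

lemma poly_apply_pCons: "poly_apply (pCons a p) x = a *s x + T (poly_apply p x)"
proof -
  have "poly_apply (pCons a p) x = (\<Sum>i\<le>Suc (degree p). coeff (pCons a p) i *s (T ^^ i) x)"
    by (rule poly_apply_eq_sum) (simp add: degree_pCons_le)
  also have "\<dots> = a *s x + (\<Sum>i\<le>degree p. coeff p i *s T ((T ^^ i) x))"
    by (subst sum.atMost_Suc_shift) simp
  also have "\<dots> = a *s x + T (poly_apply p x)"
    by (simp add: poly_apply_def T.sum T.scale)
  finally show ?thesis .
qed

lemma poly_apply_linear_factor: "poly_apply [:- a, 1:] x = T x - a *s x"
  by (simp add: poly_apply_pCons)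

lemma poly_apply_mult: "poly_apply (p * q) x = poly_apply p (poly_apply q x)"
proof (induction p)
  case (pCons a p)
  have "poly_apply (pCons a p * q) x = a *s poly_apply q x + poly_apply (pCons 0 (p * q)) x"
    by (simp add: poly_apply_add poly_apply_smult)
  also have "\<dots> = poly_apply (pCons a p) (poly_apply q x)"
    by (simp add: poly_apply_pCons pCons.IH)
  finally show ?case .
qed simp

lemma annihilating_poly_exists:
  assumes "finite B" "\<And>k. (T ^^ k) x \<in> span B"
  shows "\<exists>q. q \<noteq> 0 \<and> poly_apply q x = 0"
proof -
  obtain k where "(T ^^ k) x \<in> span ((\<lambda>j. (T ^^ j) x) ` {..<k})"
    using sequence_in_finite_span_dependent[of B "\<lambda>j. (T ^^ j) x", OF assms] by blast
  then obtain c where c: "(T ^^ k) x = (\<Sum>j<k. c j *s (T ^^ j) x)"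
    by (blast dest: in_span_image_lessThan)
  define q where "q = monom 1 k - (\<Sum>j<k. monom (c j) j)"
  have "coeff q k = 1"
    by (simp add: q_def coeff_diff coeff_sum coeff_monom)
  moreover have "poly_apply q x = 0"
    by (simp add: q_def poly_apply_diff poly_apply_sum poly_apply_monom c)
  ultimately show ?thesis
    by (intro exI[of _ q]) auto
qed

end

lemma eigenvector_in_invariant_subspace:
  fixes scale :: "'a::alg_closed_field \<Rightarrow> 'b::ab_group_add \<Rightarrow> 'b"
  assumes "linear_endo scale T"
    and S: "module.subspace scale S" "\<And>y. y \<in> S \<Longrightarrow> T y \<in> S"
    and "x \<in> S" "x \<noteq> 0" "q \<noteq> 0" "linear_endo.poly_apply scale T q x = 0"
  shows "\<exists>c v. v \<in> S \<and> v \<noteq> 0 \<and> T v = scale c v"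
proof -
  interpret linear_endo scale T by fact
  show ?thesis
    using assms(4-)
  proof (induction "degree q" arbitrary: q x rule: less_induct)
    case less
    show ?case
    proof (cases "degree q = 0")
      case True
      then obtain c where "q = [:c:]"
        by (rule degree_eq_zeroE)
      with less.prems show ?thesis
        by (simp add: poly_apply_pCons scale_eq_0_iff)
    next
      case False
      then obtain a where "poly q a = 0"
        using alg_closed_imp_poly_has_root by blast
      then have "[:- a, 1:] dvd q"
        by (simp add: dvd_iff_poly_eq_0)
      then obtain h where q: "q = h * [:- a, 1:]"
        by (metis dvdE mult.commute)
      define y where "y = T x - scale a x"
      show ?thesis
      proof (cases "y = 0")
        case True
        with less.prems show ?thesis
          by (auto simp: y_def)
      next
        case False
        from less.prems q have h: "h \<noteq> 0"
          by auto
        then have "degree q = degree h + 1"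
          unfolding q by (subst degree_mult_eq) auto
        then have deg: "degree h < degree q"
          by simp
        have "y \<in> S"
          unfolding y_def using S less.prems by (intro subspace_diff subspace_scale) auto
        moreover have "poly_apply h y = poly_apply q x"
          by (simp only: q poly_apply_mult poly_apply_linear_factor y_def)
        ultimately show ?thesis
          using less.hyps[OF deg] less.prems False h by simp
      qed
    qed
  qed
qed

lemma lookup_psmult [simp]:
  "Poly_Mapping.lookup (psmult c p) m = c * Poly_Mapping.lookup p m"
  by (simp add: psmult_def map.rep_eq when_def)

lemma lookup_map:
  "f 0 = 0 \<Longrightarrow> Poly_Mapping.lookup (Poly_Mapping.map f p) m = f (Poly_Mapping.lookup p m)"
  by (simp add: map.rep_eq when_def)

lemma keys_map_subset: "Poly_Mapping.keys (Poly_Mapping.map f p) \<subseteq> Poly_Mapping.keys p"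
  by (simp add: keys.rep_eq map.rep_eq subset_iff when_def)

lemma keys_psmult:
  "(c :: 'a :: semiring_no_zero_divisors) \<noteq> 0 \<Longrightarrow>
    Poly_Mapping.keys (psmult c p) = Poly_Mapping.keys p"
  by (auto simp: in_keys_iff)

interpretation mpoly: vector_space "psmult :: 'a::field \<Rightarrow> 'a mpoly \<Rightarrow> 'a mpoly"
  by unfold_locales (auto intro!: poly_mapping_eqI simp: lookup_add algebra_simps)

lemma in_Pn_iff: "p \<in> Pn n \<longleftrightarrow> Poly_Mapping.keys p \<subseteq> {m. Poly_Mapping.keys m \<subseteq> {..<n}}"
  by (auto simp: Pn_def)

lemma map_in_Pn: "p \<in> Pn n \<Longrightarrow> Poly_Mapping.map f p \<in> Pn n"
  by (meson in_Pn_iff keys_map_subset order_trans)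

lemma subspace_Pn: "mpoly.subspace (Pn n)"
  unfolding mpoly.subspace_def
proof (intro conjI ballI allI)
  show "0 \<in> Pn n"
    by (simp add: Pn_def)
  show "p + q \<in> Pn n" if "p \<in> Pn n" "q \<in> Pn n" for p q :: "'a mpoly"
    using that by (meson in_Pn_iff keys_add Un_least order_trans)
  show "psmult c p \<in> Pn n" if "p \<in> Pn n" for c and p :: "'a mpoly"
    unfolding psmult_def using that by (rule map_in_Pn)
qed

(* A is only assumed linear on Pn n; precomposing it with this projection onto Pn n gives a map
   that is linear on all polynomials and can therefore be complexified. *)
definition restrict_vars :: "nat \<Rightarrow> 'a::zero mpoly \<Rightarrow> 'a mpoly" where
  "restrict_vars n = Poly_Mapping.mapp (\<lambda>m c. if Poly_Mapping.keys m \<subseteq> {..<n} then c else 0)"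

lemma lookup_restrict_vars:
  "Poly_Mapping.lookup (restrict_vars n p) m =
     (if Poly_Mapping.keys m \<subseteq> {..<n} then Poly_Mapping.lookup p m else 0)"
  by (auto simp: restrict_vars_def lookup_mapp when_def in_keys_iff)

lemma restrict_vars_in_Pn: "restrict_vars n p \<in> Pn n"
proof -
  have "Poly_Mapping.keys m \<subseteq> {..<n}" if "m \<in> Poly_Mapping.keys (restrict_vars n p)" for m
    using that by (simp add: in_keys_iff lookup_restrict_vars split: if_splits)
  then show ?thesis
    by (auto simp: Pn_def)
qed

lemma restrict_vars_id: "p \<in> Pn n \<Longrightarrow> restrict_vars n p = p"
  by (rule poly_mapping_eqI) (auto simp: Pn_def in_keys_iff lookup_restrict_vars)

lemma linear_comp_restrict_vars:
  assumes "linear_on_Pn n A"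
  shows "Vector_Spaces.linear psmult psmult (A \<circ> restrict_vars n)"
proof -
  have A_add: "A (p + q) = A p + A q" if "p \<in> Pn n" "q \<in> Pn n" for p q
    using assms that by (simp add: linear_on_Pn_def)
  have A_scale: "A (psmult c p) = psmult c (A p)" if "p \<in> Pn n" for c p
    using assms that by (simp add: linear_on_Pn_def)
  have "restrict_vars n (p + q) = restrict_vars n p + restrict_vars n q" for p q :: "real mpoly"
    by (rule poly_mapping_eqI) (simp add: lookup_restrict_vars lookup_add)
  moreover have "restrict_vars n (psmult c p) = psmult c (restrict_vars n p)" for c and p :: "real mpoly"
    by (rule poly_mapping_eqI) (simp add: lookup_restrict_vars)
  ultimately show ?thesis
    by (simp add: Vector_Spaces.linear_iff mpoly.vector_space_axioms A_add A_scale restrict_vars_in_Pn)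
qed

lemma complexify_of_real:
  assumes "T 0 = 0"
  shows "complexify T (Poly_Mapping.map of_real p) = Poly_Mapping.map of_real (T p)"
proof -
  have Re: "Poly_Mapping.map Re (Poly_Mapping.map complex_of_real p) = p"
    by (rule poly_mapping_eqI) (simp add: lookup_map)
  have Im: "Poly_Mapping.map Im (Poly_Mapping.map complex_of_real p) = 0"
    by (rule poly_mapping_eqI) (simp add: lookup_map)
  show ?thesis
    unfolding complexify_def Re Im assms by (simp add: map_eq_zero_iff)
qed

lemma complexify_in_Pn: "(\<And>p. T p \<in> Pn n) \<Longrightarrow> complexify T p \<in> Pn n"
  unfolding complexify_def
  by (intro mpoly.subspace_add[OF subspace_Pn] mpoly.subspace_scale[OF subspace_Pn] map_in_Pn)

lemma complexify_cong_Pn: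
  "p \<in> Pn n \<Longrightarrow> (\<And>q. q \<in> Pn n \<Longrightarrow> T q = T' q) \<Longrightarrow> complexify T p = complexify T' p"
  by (simp add: complexify_def map_in_Pn)

lemma linear_complexify:
  assumes "Vector_Spaces.linear psmult psmult T"
  shows "Vector_Spaces.linear psmult psmult (complexify T)"
proof -
  interpret T: Vector_Spaces.linear psmult psmult T by fact
  let ?Re = "Poly_Mapping.map Re" and ?Im = "Poly_Mapping.map Im"
  have Re_add: "?Re (p + q) = ?Re p + ?Re q" and Im_add: "?Im (p + q) = ?Im p + ?Im q" for p q
    by (auto intro!: poly_mapping_eqI simp: lookup_map lookup_add)
  have Re_scale: "?Re (psmult c p) = psmult (Re c) (?Re p) - psmult (Im c) (?Im p)"
    and Im_scale: "?Im (psmult c p) = psmult (Re c) (?Im p) + psmult (Im c) (?Re p)" for c p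
    by (auto intro!: poly_mapping_eqI simp: lookup_map lookup_add lookup_minus)
  have "complexify T (p + q) = complexify T p + complexify T q" for p q
    by (rule poly_mapping_eqI) (simp add: complexify_def Re_add Im_add T.add lookup_add lookup_map distrib_left)
  moreover have "complexify T (psmult c p) = psmult c (complexify T p)" for c p
    by (rule poly_mapping_eqI)
      (simp add: complexify_def Re_scale Im_scale T.add T.diff T.scale lookup_add lookup_minus
        lookup_map complex_eq_iff algebra_simps)
  ultimately show ?thesis
    by (simp add: Vector_Spaces.linear_iff mpoly.vector_space_axioms)
qed

lemma keys_summand_subset:
  fixes f :: "nat \<Rightarrow> 'a \<Rightarrow>\<^sub>0 'b::ab_group_add"
  shows "Poly_Mapping.keys (f k) \<subseteq> (\<Union>N. Poly_Mapping.keys (\<Sum>i\<le>N. f i))"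
proof (cases k)
  case 0
  then have "f k = (\<Sum>i\<le>0. f i)"
    by simp
  then show ?thesis
    using UN_upper[of 0 UNIV "\<lambda>N. Poly_Mapping.keys (\<Sum>i\<le>N. f i)"] by simp
next
  case (Suc j)
  then have "f k = (\<Sum>i\<le>k. f i) - (\<Sum>i\<le>j. f i)"
    by simp
  then have "Poly_Mapping.keys (f k) \<subseteq>
      Poly_Mapping.keys (\<Sum>i\<le>k. f i) \<union> Poly_Mapping.keys (\<Sum>i\<le>j. f i)"
    by (simp add: keys_diff)
  also have "\<dots> \<subseteq> (\<Union>N. Poly_Mapping.keys (\<Sum>i\<le>N. f i))"
    by (intro Un_least UN_upper UNIV_I)
  finally show ?thesis .
qed

lemma exp_well_defined_bounded_degree:
  assumes "exp_well_defined n A t" "t \<noteq> 0" "f \<in> Pn n"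
  shows "\<exists>D. \<forall>k. \<forall>m \<in> Poly_Mapping.keys ((A ^^ k) f). mdeg m \<le> D"
proof -
  define S where "S N = (\<Sum>k\<le>N. psmult (t ^ k / fact k) ((A ^^ k) f))" for N
  from assms(1,3) obtain g where "poly_conv S g"
    unfolding exp_well_defined_def S_def by blast
  then obtain D where D: "\<And>N m. m \<in> Poly_Mapping.keys (S N) \<Longrightarrow> mdeg m \<le> D"
    unfolding poly_conv_def by blast
  have "Poly_Mapping.keys ((A ^^ k) f) \<subseteq> (\<Union>N. Poly_Mapping.keys (S N))" for k
  proof -
    have "Poly_Mapping.keys ((A ^^ k) f) = Poly_Mapping.keys (psmult (t ^ k / fact k) ((A ^^ k) f))"
      using assms(2) by (simp add: keys_psmult)
    also have "\<dots> \<subseteq> (\<Union>N. Poly_Mapping.keys (S N))"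
      unfolding S_def by (rule keys_summand_subset)
    finally show ?thesis .
  qed
  with D show ?thesis
    by blast
qed

lemma finite_bounded_monomials: "finite {m :: nat \<Rightarrow>\<^sub>0 nat. mdeg m \<le> D \<and> Poly_Mapping.keys m \<subseteq> {..<n}}"
proof -
  let ?F = "{f :: nat \<Rightarrow> nat. \<forall>i. (i \<in> {..<n} \<longrightarrow> f i \<in> {..D}) \<and> (i \<notin> {..<n} \<longrightarrow> f i = 0)}"
  have "Poly_Mapping.lookup m \<in> ?F" if "mdeg m \<le> D" "Poly_Mapping.keys m \<subseteq> {..<n}" for m
  proof -
    have "Poly_Mapping.lookup m i \<le> mdeg m" for i
      unfolding mdeg_def by (cases "i \<in> Poly_Mapping.keys m") (auto simp: in_keys_iff intro: member_le_sum)
    moreover have "Poly_Mapping.lookup m i = 0" if "i \<notin> {..<n}" for i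
      using that \<open>Poly_Mapping.keys m \<subseteq> {..<n}\<close> by (auto simp: in_keys_iff)
    ultimately show ?thesis
      using \<open>mdeg m \<le> D\<close> by (auto intro: order_trans)
  qed
  then have "{m. mdeg m \<le> D \<and> Poly_Mapping.keys m \<subseteq> {..<n}} \<subseteq> Poly_Mapping.lookup -` ?F"
    by blast
  moreover have "finite (Poly_Mapping.lookup -` ?F)"
    by (intro finite_vimageI finite_set_of_finite_funs injI) (auto intro: poly_mapping_eqI)
  ultimately show ?thesis
    by (rule finite_subset)
qed

lemma in_span_monomials:
  assumes "finite K" "Poly_Mapping.keys (p :: 'a::field mpoly) \<subseteq> K"
  shows "p \<in> mpoly.span ((\<lambda>m. Poly_Mapping.single m 1) ` K)"
proof -
  have "p = (\<Sum>m\<in>K. psmult (Poly_Mapping.lookup p m) (Poly_Mapping.single m 1))" (is "p = ?s")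
  proof (rule poly_mapping_eqI)
    fix k
    have "Poly_Mapping.lookup ?s k = (\<Sum>m\<in>K. if m = k then Poly_Mapping.lookup p m else 0)"
      by (auto simp: lookup_sum lookup_single when_def intro!: sum.cong)
    also have "\<dots> = Poly_Mapping.lookup p k"
      using assms by (auto simp: in_keys_iff)
    finally show "Poly_Mapping.lookup p k = Poly_Mapping.lookup ?s k"
      by simp
  qed
  also have "\<dots> \<in> mpoly.span ((\<lambda>m. Poly_Mapping.single m 1) ` K)"
    by (intro mpoly.span_sum mpoly.span_scale mpoly.span_base imageI)
  finally show ?thesis .
qed

definition complex_extension :: "nat \<Rightarrow> (real mpoly \<Rightarrow> real mpoly) \<Rightarrow> complex mpoly \<Rightarrow> complex mpoly" where
  "complex_extension n A = complexify (A \<circ> restrict_vars n)"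

lemma linear_endo_complex_extension:
  "linear_on_Pn n A \<Longrightarrow> linear_endo psmult (complex_extension n A)"
  unfolding complex_extension_def
  by (intro linear_endo.intro linear_endo_axioms.intro mpoly.vector_space_axioms
      linear_complexify linear_comp_restrict_vars)

lemma complex_extension_in_Pn:
  "linear_on_Pn n A \<Longrightarrow> complex_extension n A p \<in> Pn n"
  unfolding complex_extension_def
  by (intro complexify_in_Pn) (simp add: linear_on_Pn_def restrict_vars_in_Pn)

lemma complex_extension_eq_complexify:
  assumes "p \<in> Pn n"
  shows "complex_extension n A p = complexify A p"
  unfolding complex_extension_def using assms by (rule complexify_cong_Pn) (simp add: restrict_vars_id)

lemma complex_extension_of_real:
  assumes "linear_on_Pn n A" "p \<in> Pn n"
  shows "complex_extension n A (Poly_Mapping.map of_real p) = Poly_Mapping.map of_real (A p)"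
proof -
  interpret A': Vector_Spaces.linear psmult psmult "A \<circ> restrict_vars n"
    by (rule linear_comp_restrict_vars[OF assms(1)])
  show ?thesis
    unfolding complex_extension_def complexify_of_real[of "A \<circ> restrict_vars n", OF A'.zero]
    using assms(2) by (simp add: restrict_vars_id)
qed

lemma frakg_orbit_in_finite_span:
  assumes "A \<in> frakg n"
  shows "\<exists>K. finite K \<and> (\<forall>k. (complex_extension n A ^^ k) 1 \<in> mpoly.span K)"
proof -
  from assms have A: "linear_on_Pn n A" and "exp_well_defined n A 1"
    by (auto simp: frakg_def)
  have one: "(1 :: real mpoly) \<in> Pn n"
    by (simp add: Pn_def)
  have orbit_Pn: "(A ^^ k) 1 \<in> Pn n" for k
    using A by (induction k) (simp_all add: one linear_on_Pn_def)
  obtain D where D: "\<And>k m. m \<in> Poly_Mapping.keys ((A ^^ k) 1) \<Longrightarrow> mdeg m \<le> D"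
    using exp_well_defined_bounded_degree[OF \<open>exp_well_defined n A 1\<close> _ one] by auto
  have of_real_one: "Poly_Mapping.map complex_of_real 1 = 1"
    by (rule poly_mapping_eqI) (simp add: lookup_map lookup_one when_def)
  have orbit: "(complex_extension n A ^^ k) 1 = Poly_Mapping.map complex_of_real ((A ^^ k) 1)" for k
    by (induction k) (simp_all add: of_real_one complex_extension_of_real[OF A orbit_Pn])
  define K where "K = {m. mdeg m \<le> D \<and> Poly_Mapping.keys m \<subseteq> {..<n}}"
  have "Poly_Mapping.keys ((complex_extension n A ^^ k) 1) \<subseteq> K" for k
    using keys_map_subset D orbit_Pn by (fastforce simp: K_def orbit in_Pn_iff)
  then have "(complex_extension n A ^^ k) 1 \<in> mpoly.span ((\<lambda>m. Poly_Mapping.single m 1) ` K)" for k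
    by (rule in_span_monomials[OF finite_bounded_monomials[of D n, folded K_def]])
  then show ?thesis
    using finite_bounded_monomials[of D n, folded K_def] by blast
qed

theorem mainTheorem1:
  fixes n :: nat and A :: "real mpoly \<Rightarrow> real mpoly"
  assumes "A \<in> frakg n"
  shows "\<exists>(c::complex) (p::complex mpoly). p \<in> Pn n \<and> p \<noteq> 0 \<and> complexify A p = psmult c p"
proof -
  from assms have A: "linear_on_Pn n A"
    by (simp add: frakg_def)
  interpret B: linear_endo psmult "complex_extension n A"
    by (rule linear_endo_complex_extension[OF A])
  obtain K where "finite K" "\<And>k. (complex_extension n A ^^ k) 1 \<in> mpoly.span K"
    using frakg_orbit_in_finite_span[OF assms] by blast
  then obtain q where "q \<noteq> 0" "B.poly_apply q 1 = 0"
    using B.annihilating_poly_exists by blast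
  moreover have "(1 :: complex mpoly) \<in> Pn n"
    by (simp add: Pn_def)
  ultimately obtain c v where "v \<in> Pn n" "v \<noteq> 0" "complex_extension n A v = psmult c v"
    using eigenvector_in_invariant_subspace[OF B.linear_endo_axioms subspace_Pn
        complex_extension_in_Pn[OF A]] by (meson one_neq_zero)
  then show ?thesis
    using complex_extension_eq_complexify by metis
qed

end
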